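(* Let $\bar R_m(\varepsilon)$ be defined by $\bar R_1(\varepsilon)=\varepsilon$ and, for $m\ge2$, $\big[(-1)^m(1+\varepsilon)^m+(1+\varepsilon)\big]\bar R_m(\varepsilon)=-(3+\varepsilon)\sum_{j=1}^{m-1}\bar R_j(\varepsilon)\bar R_{m-j}(\varepsilon)$. Then each $\bar R_m$ is analytic at $\varepsilon=0$ and, as $\varepsilon\to0$, $$\bar R_{2m+1}(\varepsilon)=\varepsilon^{m+1}\big(a_m+O(\varepsilon)\big)\quad(m\ge0),\qquad \bar R_{2n}(\varepsilon)=\varepsilon^{n+1}\big(c_n+O(\varepsilon)\big)\quad(n\ge1),$$ where $$a_m=\frac{(-9)^m\,\Gamma(m+\tfrac12)}{\sqrt{\pi}\,m!},\qquad c_n=\frac{(-9)^n}{6}.$$ Equivalently, for $|\tau|<1/3$, $$\sum_{m\ge0}a_m\tau^{2m+1}=\frac{\tau}{\sqrt{1+9\tau^2}},\qquad \sum_{n\ge1}c_n\tau^{2n}=-\frac{3}{2}\,\frac{\tau^2}{1+9\tau^2}.$$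
   Context: The $\bar R_m$ are the coefficient functions of the transseries solution of the static logistic map $y(n+1)=(3+\varepsilon)y(n)(1-y(n))$ about its fixed point $(2+\varepsilon)/(3+\varepsilon)$, normalised by $\bar R_1=\varepsilon$. The coefficient $(-1)^m(1+\varepsilon)^m+(1+\varepsilon)$ is nonzero for $\varepsilon>0$, $m\ge 2$. *)

theory Defs
  imports "HOL-Analysis.Analysis" "HOL-Library.Landau_Symbols"
begin

text \<open>Coefficient functions of the transseries of the static logistic map.
  Rbar 0 is an unused dummy value (0). The definition is generic over fields
  so it can be instantiated at real and complex arguments.\<close>

fun Rbar :: "nat \<Rightarrow> 'a::field \<Rightarrow> 'a" where
  "Rbar 0 e = 0"
| "Rbar (Suc 0) e = e"
| "Rbar (Suc (Suc k)) e =
     - (3 + e) * (\<Sum>j\<in>{1..Suc k}. Rbar j e * Rbar (Suc (Suc k) - j) e)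
     / ((-1) ^ Suc (Suc k) * (1 + e) ^ Suc (Suc k) + (1 + e))"

definition a_coef :: "nat \<Rightarrow> real" where
  "a_coef m = (-9) ^ m * Gamma (real m + 1/2) / (sqrt pi * fact m)"

definition c_coef :: "nat \<Rightarrow> real" where
  "c_coef n = (-9) ^ n / 6"

end

(* Put Rbar m e = e ^ (m div 2 + 1) * G m e, with G = Rbar_reduced. The product Rbar j * Rbar (m - j) vanishes at
   e = 0 to at least the order of Rbar m times the denominator, which is nonzero at 0 for even m
   and has a simple zero with slope -(m - 1) for odd m. So G m obeys a recursion whose
   denominators do not vanish at 0: G m is analytic there and G m 0 is the leading coefficient.
   At e = 0 the recursion couples only odd-odd pairs (m even) resp. odd-even pairs (m odd).
   With a_p = 9^p * (-1/2 gchoose p), the even equation 2 c_(n+1) = -3 sum a_p a_(n-p) is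
   Vandermonde's identity for -1/2 - 1/2 = -1, and the odd equation
   (n+1) a_(n+1) = 3 sum c_(p+1) a_(n-p) reduces to the partial sums
   sum_(q<N) (1/2)_q / q! = 2 N (1/2)_N / N!. *)

theory Submission
  imports Defs "HOL-Computational_Algebra.Formal_Power_Series"
begin

definition rbar_order :: "nat \<Rightarrow> nat" where
  "rbar_order m = m div 2 + 1"

lemma rbar_order_add:
  assumes "1 \<le> j" "j < m"
  shows "rbar_order j + rbar_order (m - j)
           = rbar_order m + of_bool (odd m) + of_bool (even m \<and> even j)"
  using assms unfolding rbar_order_def by (cases "even m"; cases "even j") (auto elim!: evenE oddE)

(* The denominator of the recursion for Rbar m, with its simple zero at 0 removed for odd m. *)
definition den_reduced :: "nat \<Rightarrow> 'a::field \<Rightarrow> 'a" where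
  "den_reduced m z = (if even m then (1 + z) ^ m + (1 + z)
     else - (1 + z) * (\<Sum>i\<in>{1..m-1}. of_nat ((m - 1) choose i) * z ^ (i - 1)))"

lemma denominator_factor:
  "(-1) ^ m * (1 + z) ^ m + (1 + z) = z ^ of_bool (odd m) * den_reduced m (z::'a::field)"
proof (cases "even m")
  case False
  then obtain k where m: "m = Suc k" by (cases m) auto
  have "(1 + z) ^ k = 1 + (\<Sum>i\<in>{1..k}. of_nat (k choose i) * z ^ i)"
    using binomial_ring[of z 1 k]
    by (simp add: add.commute atMost_atLeast0 sum.atLeast_Suc_atMost)
  also have "(\<Sum>i\<in>{1..k}. of_nat (k choose i) * z ^ i)
      = z * (\<Sum>i\<in>{1..k}. of_nat (k choose i) * z ^ (i - 1))"
    by (auto simp: sum_distrib_left power_eq_if intro!: sum.cong)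
  finally show ?thesis
    using False by (simp add: m den_reduced_def algebra_simps)
qed (simp add: den_reduced_def)

lemma den_reduced_0: "den_reduced m (0::'a::field) = (if even m then 2 else - of_nat (m - 1))"
proof -
  have "(\<Sum>i\<in>{1..m-1}. of_nat ((m - 1) choose i) * (0::'a) ^ (i - 1))
          = (\<Sum>i\<in>{1..m-1}. if i = 1 then of_nat (m - 1) else 0)"
    by (intro sum.cong) auto
  then show ?thesis
    by (simp add: den_reduced_def)
qed

lemma den_reduced_0_neq_0: "2 \<le> m \<Longrightarrow> den_reduced m (0::'a::field_char_0) \<noteq> 0"
  by (simp add: den_reduced_0)

lemma den_reduced_field_differentiable [derivative_intros]:
  "den_reduced m field_differentiable (at (z::'a::real_normed_field))"
  unfolding den_reduced_def [abs_def] by (cases "even m") (auto intro!: derivative_intros)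

lemma eventually_den_reduced_neq_0:
  "\<forall>\<^sub>F z in nhds (0::'a::real_normed_field). \<forall>k\<in>{2..m}. den_reduced k z \<noteq> 0"
proof (rule eventually_ball_finite)
  show "\<forall>k\<in>{2..m}. \<forall>\<^sub>F z in nhds 0. den_reduced k z \<noteq> (0::'a)"
  proof
    fix k :: nat
    assume "k \<in> {2..m}"
    moreover have "isCont (den_reduced k) (0::'a)"
      by (rule field_differentiable_imp_continuous_at) (rule den_reduced_field_differentiable)
    ultimately show "\<forall>\<^sub>F z in nhds 0. den_reduced k z \<noteq> (0::'a)"
      by (intro tendsto_imp_eventually_ne[of _ "den_reduced k 0"])
         (auto simp: isCont_def tendsto_nhds_iff den_reduced_0_neq_0)
  qed
qed simp

(* The factor z marks the pairs (j, m - j) of even indices with m even, whose vanishing orders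
   exceed that of Rbar m by one. *)
fun Rbar_reduced :: "nat \<Rightarrow> 'a::field \<Rightarrow> 'a" where
  "Rbar_reduced 0 z = 0"
| "Rbar_reduced (Suc 0) z = 1"
| "Rbar_reduced (Suc (Suc k)) z =
     - (3 + z) * (\<Sum>j\<in>{1..Suc k}. z ^ of_bool (even k \<and> even j)
                    * Rbar_reduced j z * Rbar_reduced (Suc (Suc k) - j) z)
     / den_reduced (Suc (Suc k)) z"

lemma Rbar_rec:
  "2 \<le> m \<Longrightarrow> Rbar m z = - (3 + z) * (\<Sum>j\<in>{1..m-1}. Rbar j z * Rbar (m - j) z)
                         / ((-1) ^ m * (1 + z) ^ m + (1 + z))"
proof -
  assume "2 \<le> m"
  then obtain k where "m = Suc (Suc k)"
    by (metis add_2_eq_Suc le_Suc_ex)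
  then show ?thesis
    by (simp only: Rbar.simps diff_Suc_1)
qed

lemma Rbar_reduced_rec:
  "2 \<le> m \<Longrightarrow> Rbar_reduced m z
     = - (3 + z) * (\<Sum>j\<in>{1..m-1}. z ^ of_bool (even m \<and> even j) * Rbar_reduced j z * Rbar_reduced (m - j) z)
       / den_reduced m z"
proof -
  assume "2 \<le> m"
  then obtain k where "m = Suc (Suc k)"
    by (metis add_2_eq_Suc le_Suc_ex)
  then show ?thesis
    by simp
qed

lemma Rbar_eq_reduced:
  fixes z :: "'a::field"
  assumes "z \<noteq> 0" and "\<forall>k\<in>{2..m}. den_reduced k z \<noteq> 0"
  shows "Rbar m z = z ^ rbar_order m * Rbar_reduced m z"
  using assms(2)
proof (induction m rule: less_induct)
  case (less m)
  show ?case
  proof (cases "2 \<le> m")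
    case False
    then consider "m = 0" | "m = 1" by linarith
    then show ?thesis by cases (simp_all add: rbar_order_def)
  next
    case True
    define p where "p = rbar_order m + of_bool (odd m)"
    have "Rbar j z * Rbar (m - j) z
        = z ^ p * (z ^ of_bool (even m \<and> even j) * Rbar_reduced j z * Rbar_reduced (m - j) z)"
      if "j \<in> {1..m-1}" for j
    proof -
      have j: "1 \<le> j" "j < m"
        using that True by auto
      then have "Rbar j z * Rbar (m - j) z
          = z ^ (rbar_order j + rbar_order (m - j)) * (Rbar_reduced j z * Rbar_reduced (m - j) z)"
        using less by (simp add: power_add mult_ac)
      also have "rbar_order j + rbar_order (m - j) = p + of_bool (even m \<and> even j)"
        using rbar_order_add[OF j] by (simp add: p_def)
      finally show ?thesis
        by (simp add: power_add mult_ac)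
    qed
    then have "(\<Sum>j\<in>{1..m-1}. Rbar j z * Rbar (m - j) z)
        = z ^ p * (\<Sum>j\<in>{1..m-1}. z ^ of_bool (even m \<and> even j)
                                     * Rbar_reduced j z * Rbar_reduced (m - j) z)"
      by (simp add: sum_distrib_left)
    then have "Rbar m z = - (3 + z) * (z ^ p * (\<Sum>j\<in>{1..m-1}. z ^ of_bool (even m \<and> even j)
                  * Rbar_reduced j z * Rbar_reduced (m - j) z))
                  / (z ^ of_bool (odd m) * den_reduced m z)"
      using True by (simp add: Rbar_rec denominator_factor)
    also have "\<dots> = z ^ rbar_order m * Rbar_reduced m z"
      using True less.prems assms(1) by (simp add: Rbar_reduced_rec p_def power_add)
    finally show ?thesis .
  qed
qed

lemma Rbar_reduced_field_differentiable:
  fixes z :: "'a::real_normed_field"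
  assumes "\<forall>k\<in>{2..m}. den_reduced k z \<noteq> 0"
  shows "Rbar_reduced m field_differentiable (at z)"
  using assms
proof (induction m rule: less_induct)
  case (less m)
  show ?case
  proof (cases "2 \<le> m")
    case False
    then consider "m = 0" | "m = 1" by linarith
    then show ?thesis by cases simp_all
  next
    case True
    then have "Rbar_reduced m = (\<lambda>z::'a. - (3 + z) * (\<Sum>j\<in>{1..m-1}. z ^ of_bool (even m \<and> even j)
                   * Rbar_reduced j z * Rbar_reduced (m - j) z) / den_reduced m z)"
      by (simp add: fun_eq_iff Rbar_reduced_rec)
    then show ?thesis
      using True less by (auto intro!: derivative_intros)
  qed
qed

lemma eventually_Rbar_eq_reduced:
  "\<forall>\<^sub>F z in at (0::'a::real_normed_field). Rbar m z = z ^ rbar_order m * Rbar_reduced m z"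
proof -
  have "\<forall>\<^sub>F z in at (0::'a). \<forall>k\<in>{2..m}. den_reduced k z \<noteq> 0"
    using eventually_den_reduced_neq_0[of m] by (auto simp: eventually_at_filter elim: eventually_mono)
  moreover have "\<forall>\<^sub>F z in at (0::'a). z \<noteq> 0"
    by (simp add: eventually_at_filter)
  ultimately show ?thesis
    by eventually_elim (rule Rbar_eq_reduced)
qed

lemma Rbar_reduced_analytic: "Rbar_reduced m analytic_on {0::complex}"
proof -
  obtain e where "e > 0" and e: "\<forall>z\<in>ball 0 e. \<forall>k\<in>{2..m}. den_reduced k z \<noteq> (0::complex)"
    using eventually_den_reduced_neq_0[of m] by (auto simp: eventually_nhds_metric ball_def dist_commute)
  have "Rbar_reduced m field_differentiable (at z)" if "z \<in> ball 0 e" for z :: complex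
  proof (rule Rbar_reduced_field_differentiable)
    show "\<forall>k\<in>{2..m}. den_reduced k z \<noteq> 0"
      using e that by blast
  qed
  then have "Rbar_reduced m holomorphic_on ball 0 e"
    by (simp add: holomorphic_on_def field_differentiable_at_within)
  with \<open>e > 0\<close> show ?thesis
    by (auto simp: analytic_on_def)
qed

lemma a_coef_pochhammer: "a_coef n = (-9) ^ n * pochhammer (1/2) n / fact n"
proof -
  have "(1/2::real) \<notin> \<int>\<^sub>\<le>\<^sub>0"
    by (auto dest: nonpos_Ints_nonpos)
  then show ?thesis
    by (simp add: a_coef_def pochhammer_Gamma Gamma_one_half_real add.commute)
qed

lemma a_coef_gbinomial: "a_coef n = 9 ^ n * ((-1/2) gchoose n)"
  by (simp add: a_coef_pochhammer gbinomial_pochhammer power_mult_distrib[symmetric])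

lemma a_coef_convolution: "(\<Sum>p\<le>n. a_coef p * a_coef (n - p)) = (-9) ^ n"
proof -
  have "a_coef p * a_coef (n - p) = 9 ^ n * (((-1/2) gchoose p) * ((-1/2) gchoose (n - p)))"
    if "p \<le> n" for p
  proof -
    have "a_coef p * a_coef (n - p)
        = (9 ^ p * 9 ^ (n - p)) * (((-1/2) gchoose p) * ((-1/2) gchoose (n - p)))"
      by (simp add: a_coef_gbinomial mult_ac)
    also have "(9::real) ^ p * 9 ^ (n - p) = 9 ^ n"
      using that by (simp flip: power_add)
    finally show ?thesis .
  qed
  then have "(\<Sum>p\<le>n. a_coef p * a_coef (n - p))
      = 9 ^ n * (\<Sum>p\<le>n. ((-1/2) gchoose p) * ((-1/2) gchoose (n - p)))"
    unfolding sum_distrib_left by (intro sum.cong refl) simp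
  also have "(\<Sum>p\<le>n. ((-1/2::real) gchoose p) * ((-1/2) gchoose (n - p))) = (-1) gchoose n"
    using gbinomial_Vandermonde[of "-1/2::real" "-1/2" n] by (simp add: atMost_atLeast0)
  also have "((-1::real) gchoose n) = (-1) ^ n"
    using gbinomial_minus[of "1::real" n] by (simp add: binomial_gbinomial[symmetric])
  finally show ?thesis
    by (simp add: power_mult_distrib[symmetric])
qed

lemma sum_pochhammer_half:
  "(\<Sum>q<n. pochhammer (1/2::real) q / fact q) = 2 * n * (pochhammer (1/2) n / fact n)"
proof (induction n)
  case (Suc n)
  then show ?case
    by (simp add: pochhammer_Suc divide_simps) (simp add: algebra_simps)
qed simp

lemma c_a_coef_convolution:
  "(\<Sum>p<Suc n. c_coef (Suc p) * a_coef (n - p)) = real (Suc n) / 3 * a_coef (Suc n)"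
proof -
  define b where "b q = pochhammer (1/2::real) q / fact q" for q
  have a_b: "a_coef q = (-9) ^ q * b q" for q
    by (simp add: b_def a_coef_pochhammer)
  have sum_b: "(\<Sum>q<N. b q) = 2 * real N * b N" for N
    by (simp add: b_def sum_pochhammer_half)
  have "c_coef (Suc p) * a_coef (n - p) = (-9) ^ Suc n / 6 * b (Suc n - Suc p)" if "p < Suc n" for p
  proof -
    have "c_coef (Suc p) * a_coef (n - p) = ((-9) ^ Suc p * (-9) ^ (n - p)) / 6 * b (n - p)"
      by (simp add: c_coef_def a_b)
    also have "(-9::real) ^ Suc p * (-9) ^ (n - p) = (-9) ^ Suc n"
      using that by (simp flip: power_add)
    finally show ?thesis
      by simp
  qed
  then have "(\<Sum>p<Suc n. c_coef (Suc p) * a_coef (n - p))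
      = (-9) ^ Suc n / 6 * (\<Sum>p<Suc n. b (Suc n - Suc p))"
    unfolding sum_distrib_left by (intro sum.cong refl) simp
  also have "(\<Sum>p<Suc n. b (Suc n - Suc p)) = 2 * real (Suc n) * b (Suc n)"
    by (simp only: sum.nat_diff_reindex sum_b)
  finally show ?thesis
    by (simp add: a_b)
qed

definition lead_coef :: "nat \<Rightarrow> real" where
  "lead_coef m = (if odd m then a_coef (m div 2) else if m = 0 then 0 else c_coef (m div 2))"

lemma lead_coef_odd [simp]: "lead_coef (Suc (2 * p)) = a_coef p"
  by (simp add: lead_coef_def)

lemma sum_atLeast1_eq_lessThan:
  fixes f :: "nat \<Rightarrow> 'a::comm_monoid_add"
  assumes "f 0 = 0"
  shows "(\<Sum>j\<in>{1..m-1}. f j) = (\<Sum>j<m. f j)"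
proof (cases m)
  case (Suc k)
  then show ?thesis
    using assms by (simp add: lessThan_Suc_atMost atLeast0AtMost[symmetric] sum.atLeast_Suc_atMost)
qed simp

lemma sum_lessThan_double:
  "(\<Sum>j<2 * n. f j) = (\<Sum>p<n. f (2 * p)) + (\<Sum>p<n. f (Suc (2 * p)))"
  by (induction n) (simp_all add: algebra_simps)

lemma lead_coef_rec_even:
  assumes m: "m = 2 * (n + 1)"
  shows "(\<Sum>j\<in>{1..m-1}. 0 ^ of_bool (even j) * lead_coef j * lead_coef (m - j)) = (-9) ^ n"
proof -
  define f where "f j = 0 ^ of_bool (even j) * lead_coef j * lead_coef (m - j)" for j
  have "(\<Sum>j\<in>{1..m-1}. f j) = (\<Sum>p<n+1. f (2*p)) + (\<Sum>p<n+1. f (Suc (2*p)))"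
    using sum_atLeast1_eq_lessThan[of f m] by (simp add: f_def m sum_lessThan_double)
  also have "(\<Sum>p<n+1. f (2*p)) = 0"
    by (simp add: f_def)
  also have "(\<Sum>p<n+1. f (Suc (2*p))) = (\<Sum>p\<le>n. a_coef p * a_coef (n - p))"
  proof (rule sum.cong)
    fix p assume "p \<in> {..n}"
    then have "m - Suc (2*p) = Suc (2 * (n - p))"
      by (simp add: m)
    then show "f (Suc (2*p)) = a_coef p * a_coef (n - p)"
      by (simp add: f_def)
  qed (simp add: lessThan_Suc_atMost)
  finally show ?thesis
    by (simp add: f_def a_coef_convolution)
qed

lemma lead_coef_rec_odd:
  assumes m: "m = 2 * n + 3"
  shows "(\<Sum>j\<in>{1..m-1}. lead_coef j * lead_coef (m - j)) = 2 * real (Suc n) / 3 * a_coef (Suc n)"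
proof -
  define f where "f j = lead_coef j * lead_coef (m - j)" for j
  define T where "T = (\<Sum>p<Suc (Suc n). f (2*p))"
  have "f 0 = 0" "f m = 0"
    by (simp_all add: f_def lead_coef_def)
  then have "(\<Sum>j\<in>{1..m-1}. f j) = (\<Sum>j<Suc m. f j)"
    using sum_atLeast1_eq_lessThan[of f m] by simp
  also have "\<dots> = (\<Sum>j<2 * Suc (Suc n). f j)"
    by (rule arg_cong[where f = "\<lambda>N. \<Sum>j<N. f j"]) (simp add: m)
  also have "\<dots> = T + (\<Sum>p<Suc (Suc n). f (Suc (2*p)))"
    by (simp only: sum_lessThan_double T_def)
  also have "(\<Sum>p<Suc (Suc n). f (Suc (2*p))) = T"
    unfolding T_def sum.nat_diff_reindex[of "\<lambda>p. f (Suc (2*p))", symmetric]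
  proof (rule sum.cong)
    fix i assume "i \<in> {..<Suc (Suc n)}"
    then have "m - Suc (2 * (Suc (Suc n) - Suc i)) = 2 * i" "m - 2 * i = Suc (2 * (Suc (Suc n) - Suc i))"
      by (auto simp: m)
    then show "f (Suc (2 * (Suc (Suc n) - Suc i))) = f (2 * i)"
      unfolding f_def by (simp only: mult.commute)
  qed simp
  also have "T = (\<Sum>p<Suc n. c_coef (Suc p) * a_coef (n - p))"
  proof -
    have "T = (\<Sum>p<Suc n. f (2 * Suc p))"
      unfolding T_def sum.lessThan_Suc_shift using \<open>f 0 = 0\<close> by simp
    also have "\<dots> = (\<Sum>p<Suc n. c_coef (Suc p) * a_coef (n - p))"
    proof (rule sum.cong)
      fix p assume "p \<in> {..<Suc n}"
      then have "m - 2 * Suc p = Suc (2 * (n - p))"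
        by (simp add: m)
      then show "f (2 * Suc p) = c_coef (Suc p) * a_coef (n - p)"
        by (simp add: f_def lead_coef_def)
    qed simp
    finally show ?thesis .
  qed
  finally show ?thesis
    unfolding c_a_coef_convolution f_def by (simp add: field_simps)
qed

lemma lead_coef_rec:
  assumes "2 \<le> m"
  shows "lead_coef m * den_reduced m 0
           = - 3 * (\<Sum>j\<in>{1..m-1}. 0 ^ of_bool (even m \<and> even j) * lead_coef j * lead_coef (m - j))"
proof (cases "even m")
  case True
  have "\<exists>n. m = 2 * (n + 1)"
    using True assms by presburger
  then obtain n where m: "m = 2 * (n + 1)" ..
  have S: "(\<Sum>j\<in>{1..m-1}. 0 ^ of_bool (even m \<and> even j) * lead_coef j * lead_coef (m - j)) = (-9) ^ n"
    using True lead_coef_rec_even[OF m] by simp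
  have D: "den_reduced m (0::real) = 2"
    using True by (simp add: den_reduced_0)
  have L: "lead_coef m = (-9) ^ (n + 1) / 6"
    by (simp add: m lead_coef_def c_coef_def)
  show ?thesis
    unfolding S D L by simp
next
  case False
  have "\<exists>n. m = 2 * n + 3"
    using False assms by presburger
  then obtain n where m: "m = 2 * n + 3" ..
  have S: "(\<Sum>j\<in>{1..m-1}. 0 ^ of_bool (even m \<and> even j) * lead_coef j * lead_coef (m - j))
      = 2 * real (Suc n) / 3 * a_coef (Suc n)"
    using False lead_coef_rec_odd[OF m] by simp
  have D: "den_reduced m (0::real) = - (2 * real (Suc n))"
    using False by (simp add: den_reduced_0 m)
  have L: "lead_coef m = a_coef (Suc n)"
    by (simp add: m lead_coef_def)
  show ?thesis
    unfolding S D L by (simp add: field_simps)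
qed

lemma Rbar_reduced_0: "Rbar_reduced m (0::real) = lead_coef m"
proof (induction m rule: less_induct)
  case (less m)
  show ?case
  proof (cases "2 \<le> m")
    case False
    then consider "m = 0" | "m = 1" by linarith
    then show ?thesis
      by cases (simp_all add: lead_coef_def a_coef_def Gamma_one_half_real)
  next
    case True
    have "Rbar_reduced m (0::real) = - 3 * (\<Sum>j\<in>{1..m-1}. 0 ^ of_bool (even m \<and> even j)
                 * Rbar_reduced j 0 * Rbar_reduced (m - j) 0) / den_reduced m 0"
      using Rbar_reduced_rec[OF True, of "0::real"] by (simp only: add_0_right)
    also have "\<dots> = - 3 * (\<Sum>j\<in>{1..m-1}. 0 ^ of_bool (even m \<and> even j)
                 * lead_coef j * lead_coef (m - j)) / den_reduced m 0"
      using True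
      by (intro arg_cong2[where f = "(/)"] arg_cong2[where f = "(*)"] refl sum.cong) (auto intro!: less.IH)
    also have "\<dots> = lead_coef m"
      using lead_coef_rec[OF True] den_reduced_0_neq_0[OF True, where 'a = real]
      by (simp add: minus_divide_eq_eq)
    finally show ?thesis .
  qed
qed

lemma field_differentiable_imp_bigo:
  fixes g :: "'a::real_normed_field \<Rightarrow> 'a"
  assumes "g field_differentiable (at x)"
  shows "(\<lambda>y. g y - g x) \<in> O[at x](\<lambda>y. y - x)"
proof -
  obtain D where "(g has_field_derivative D) (at x)"
    using assms by (auto simp: field_differentiable_def)
  then have "((\<lambda>y. (g y - g x) / (y - x)) \<longlongrightarrow> D) (at x)"
    by (simp add: has_field_derivative_iff)
  then show ?thesis
    by (rule bigoI_tendsto) (simp add: eventually_at_filter)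
qed

lemma Rbar_asymptotics:
  "(\<lambda>e::real. Rbar m e - e ^ rbar_order m * lead_coef m) \<in> O[at 0](\<lambda>e. e ^ (rbar_order m + 1))"
proof -
  have "(\<lambda>e::real. e ^ rbar_order m * (Rbar_reduced m e - Rbar_reduced m 0))
          \<in> O[at 0](\<lambda>e. e ^ rbar_order m * (e - 0))"
    using field_differentiable_imp_bigo[OF Rbar_reduced_field_differentiable, of m 0]
    by (intro landau_o.big.mult) (simp_all add: den_reduced_0_neq_0)
  moreover have "\<forall>\<^sub>F e in at (0::real).
      e ^ rbar_order m * (Rbar_reduced m e - Rbar_reduced m 0) = Rbar m e - e ^ rbar_order m * lead_coef m"
    using eventually_Rbar_eq_reduced[of m] by eventually_elim (simp add: Rbar_reduced_0 algebra_simps)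
  ultimately show ?thesis
    by (simp add: landau_o.big.in_cong mult.commute)
qed

lemma Rbar_eventually_analytic:
  "\<exists>f. f analytic_on {0} \<and> (\<forall>\<^sub>F z in at (0::complex). f z = Rbar m z)"
proof (intro exI conjI)
  show "(\<lambda>z. z ^ rbar_order m * Rbar_reduced m z) analytic_on {0}"
    by (intro analytic_intros Rbar_reduced_analytic)
  show "\<forall>\<^sub>F z in at (0::complex). z ^ rbar_order m * Rbar_reduced m z = Rbar m z"
    using eventually_Rbar_eq_reduced[of m] by eventually_elim (rule sym)
qed

lemma a_coef_sums:
  fixes \<tau> :: real
  assumes "\<bar>\<tau>\<bar> < 1/3"
  shows "(\<lambda>m. a_coef m * \<tau> ^ (2*m+1)) sums (\<tau> / sqrt (1 + 9 * \<tau>^2))"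
proof -
  have "\<bar>9 * \<tau>^2\<bar> < 1"
    using assms abs_square_less_1[of "3 * \<tau>"] by (simp add: power_mult_distrib)
  then have "(\<lambda>m. \<tau> * (((-1/2) gchoose m) * (9 * \<tau>^2) ^ m)) sums (\<tau> * (1 + 9 * \<tau>^2) powr (-1/2))"
    by (intro sums_mult gen_binomial_real)
  moreover have "\<tau> * (((-1/2) gchoose m) * (9 * \<tau>^2) ^ m) = a_coef m * \<tau> ^ (2*m+1)" for m
  proof -
    have "\<tau> ^ (2*m+1) = \<tau> * (\<tau>^2) ^ m"
      by (simp add: power_mult)
    then show ?thesis
      by (simp only: a_coef_gbinomial power_mult_distrib mult_ac)
  qed
  moreover have "\<tau> * (1 + 9 * \<tau>^2) powr (-1/2) = \<tau> / sqrt (1 + 9 * \<tau>^2)"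
    by (simp add: powr_minus_divide powr_half_sqrt)
  ultimately show ?thesis
    by (simp only:)
qed

lemma c_coef_sums:
  fixes \<tau> :: real
  assumes "\<bar>\<tau>\<bar> < 1/3"
  shows "(\<lambda>n. c_coef (n+1) * \<tau> ^ (2*(n+1))) sums (- 3/2 * \<tau>^2 / (1 + 9 * \<tau>^2))"
proof -
  have "norm (-9 * \<tau>^2) < 1"
    using assms abs_square_less_1[of "3 * \<tau>"] by (simp add: power_mult_distrib)
  then have "(\<lambda>n. (- 3/2 * \<tau>^2) * (-9 * \<tau>^2) ^ n) sums ((- 3/2 * \<tau>^2) * (1 / (1 - (-9 * \<tau>^2))))"
    by (intro sums_mult geometric_sums)
  moreover have "(- 3/2 * \<tau>^2) * (-9 * \<tau>^2) ^ n = c_coef (n+1) * \<tau> ^ (2*(n+1))" for n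
  proof -
    have "\<tau> ^ (2*(n+1)) = \<tau>^2 * (\<tau>^2) ^ n"
      by (simp only: power_mult power_Suc Suc_eq_plus1[symmetric])
    moreover have "c_coef (n+1) = - 3/2 * (-9) ^ n"
      by (simp add: c_coef_def)
    ultimately show ?thesis
      by (simp only: power_mult_distrib mult_ac)
  qed
  moreover have "(- 3/2 * \<tau>^2) * (1 / (1 - (-9 * \<tau>^2))) = - 3/2 * \<tau>^2 / (1 + 9 * \<tau>^2)"
    by (simp only: diff_minus_eq_add times_divide_eq_right mult_1_right mult_minus_left)
  ultimately show ?thesis
    by (simp only:)
qed

theorem mainTheorem2:
  shows "(\<forall>m\<ge>1. \<exists>f. f analytic_on {0} \<and>
            (\<forall>\<^sub>F z in at (0::complex). f z = Rbar m z))
   \<and> (\<forall>m. (\<lambda>e::real. Rbar (2*m+1) e - e ^ (m+1) * a_coef m) \<in> O[at 0](\<lambda>e. e ^ (m+2)))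
   \<and> (\<forall>n\<ge>1. (\<lambda>e::real. Rbar (2*n) e - e ^ (n+1) * c_coef n) \<in> O[at 0](\<lambda>e. e ^ (n+2)))
   \<and> (\<forall>\<tau>::real. \<bar>\<tau>\<bar> < 1/3 \<longrightarrow>
        (\<lambda>m. a_coef m * \<tau> ^ (2*m+1)) sums (\<tau> / sqrt (1 + 9 * \<tau>^2)))
   \<and> (\<forall>\<tau>::real. \<bar>\<tau>\<bar> < 1/3 \<longrightarrow>
        (\<lambda>n. c_coef (n+1) * \<tau> ^ (2*(n+1))) sums (- 3/2 * \<tau>^2 / (1 + 9 * \<tau>^2)))"
proof (intro conjI allI impI)
  fix m :: nat
  show "\<exists>f. f analytic_on {0} \<and> (\<forall>\<^sub>F z in at (0::complex). f z = Rbar m z)"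
    by (rule Rbar_eventually_analytic)
  show "(\<lambda>e::real. Rbar (2*m+1) e - e ^ (m+1) * a_coef m) \<in> O[at 0](\<lambda>e. e ^ (m+2))"
    using Rbar_asymptotics[of "2*m+1"] by (simp add: rbar_order_def)
next
  fix n :: nat
  assume "n \<ge> 1"
  then show "(\<lambda>e::real. Rbar (2*n) e - e ^ (n+1) * c_coef n) \<in> O[at 0](\<lambda>e. e ^ (n+2))"
    using Rbar_asymptotics[of "2*n"] by (simp add: rbar_order_def lead_coef_def)
next
  fix \<tau> :: real
  assume "\<bar>\<tau>\<bar> < 1/3"
  then show "(\<lambda>m. a_coef m * \<tau> ^ (2*m+1)) sums (\<tau> / sqrt (1 + 9 * \<tau>^2))"
    and "(\<lambda>n. c_coef (n+1) * \<tau> ^ (2*(n+1))) sums (- 3/2 * \<tau>^2 / (1 + 9 * \<tau>^2))"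
    by (rule a_coef_sums, rule c_coef_sums)
qed

end
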